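(* Let $(P_n(x))_{n \ge 0}$ be a splitting sequence of a nice polynomial $P_0(x)$, with binary string $s_0 s_1 \ldots$, and suppose $s_{i-1} s_i s_{i+1} = LLS$ for some $i \in \mathbb{N}$. If $P_i(x)$ and $P_{i+2}(x)$ are both $k$-good for some $k \in \mathbb{N}$, then $P_i(x)$ is $(k+1)$-good.
   Context: $P \equiv Q \pmod{M}$ for $P,Q,M \in \mathbb{Z}[x]$ means $M$ divides $P-Q$ in $\mathbb{Z}[x]$. For $n \in \mathbb{N}_0$, $P \in \mathbb{Z}[x]$ is $n$-good if $P(x^{2^m}) \equiv P(x)^{2^m} \pmod{2^{m+1}}$ for every $m \in \{0,\dots,n\}$. A polynomial is nice if it is irreducible in $\mathbb{Z}[x]$ with leading and constant coefficients in $\{\pm 1\}$. Splitting sequence of an irreducible $P \in \mathbb{Z}[x]$: $(P_n)_{n \ge 0}$ with $P_0 = P$ such that for each $n$: if $P_n$ is irreducible, $P_{n+1}(x) = P_n(x^2)$; if $P_n$ is reducible, then (as $P_{n-1}$ is irreducible and $P_n(x) = P_{n-1}(x^2)$ factors as a product of exactly two irreducibles in $\mathbb{Z}[x]$) $P_{n+1}$ is one of these two factors. Its binary string has $s_n = L$ if $P_n$ is irreducible and $s_n = S$ otherwise. *)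

theory Defs
  imports "HOL-Computational_Algebra.Polynomial_Factorial"
begin

definition poly_cong :: "int poly \<Rightarrow> int poly \<Rightarrow> int poly \<Rightarrow> bool" where
  "poly_cong P Q M \<longleftrightarrow> M dvd (P - Q)"

definition n_good :: "nat \<Rightarrow> int poly \<Rightarrow> bool" where
  "n_good n P \<longleftrightarrow> (\<forall>m\<in>{0..n}.
     poly_cong (pcompose P (monom 1 (2 ^ m))) (P ^ (2 ^ m)) [:2 ^ (m + 1):])"

definition nice :: "int poly \<Rightarrow> bool" where
  "nice P \<longleftrightarrow> irreducible P \<and> lead_coeff P \<in> {1, -1} \<and> coeff P 0 \<in> {1, -1}"

definition splitting_sequence :: "int poly \<Rightarrow> (nat \<Rightarrow> int poly) \<Rightarrow> bool" where
  "splitting_sequence P Ps \<longleftrightarrow> irreducible P \<and> Ps 0 = P \<and>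
     (\<forall>n. (irreducible (Ps n) \<longrightarrow> Ps (Suc n) = pcompose (Ps n) [:0, 0, 1:]) \<and>
          (\<not> irreducible (Ps n) \<longrightarrow>
             (\<exists>Q R. irreducible Q \<and> irreducible R \<and> Ps n = Q * R \<and> Ps (Suc n) \<in> {Q, R})))"

datatype letter = L | S

definition binary_string :: "(nat \<Rightarrow> int poly) \<Rightarrow> nat \<Rightarrow> letter" where
  "binary_string Ps n = (if irreducible (Ps n) then L else S)"

end

theory Submission
  imports Defs
begin

text \<open>
  Let A = P_i and Q = P_(i+2). Since A is irreducible but A(x^2) is not, and 1-goodness forces
  A(0) = 1, the two factors of A(x^2) are Q(x) and Q(-x). Writing Q = E(x^2) + x O(x^2) gives
  A = E^2 - x O^2, whereas k-goodness of Q gives Q \<equiv> E^2 + x O^2 mod 2^(k+1). As A = P_(i-1)(x^2)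
  is even, comparing odd parts yields O \<equiv> 2 (o0^2 + x o1^2) mod 2^(k+1), where
  O = o0(x^2) + x o1(x^2), and this congruence bootstraps to 2^(k+1) | O. Hence
  Q(-x) \<equiv> Q mod 2^(k+2) and A \<equiv> Q mod 2^(k+1), so A(x^2) = Q(x) Q(-x) \<equiv> Q^2 \<equiv> A^2 mod 2^(k+2),
  which is exactly what a k-good A lacks to be (k+1)-good.
\<close>

text \<open>The indeterminate gets a constant of its own so that \<open>algebra_simps\<close> treats it as an
  atom; the simplifier would rewrite \<open>[:0, 1:] * p\<close> to \<open>pCons 0 p\<close>.\<close>

definition poly_X :: "'a::comm_ring_1 poly" where
  "poly_X = [:0, 1:]"

definition sq_subst :: "'a::comm_ring_1 poly \<Rightarrow> 'a poly" where
  "sq_subst p = pcompose p [:0, 0, 1:]"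

definition neg_subst :: "'a::comm_ring_1 poly \<Rightarrow> 'a poly" where
  "neg_subst p = pcompose p [:0, -1:]"

definition interleave :: "'a::comm_ring_1 poly \<Rightarrow> 'a poly \<Rightarrow> 'a poly" where
  "interleave F G = sq_subst F + poly_X * sq_subst G"

definition even_part :: "'a::comm_ring_1 poly \<Rightarrow> 'a poly" where
  "even_part p = Poly (map (\<lambda>n. coeff p (2 * n)) [0..<Suc (degree p)])"

definition odd_part :: "'a::comm_ring_1 poly \<Rightarrow> 'a poly" where
  "odd_part p = Poly (map (\<lambda>n. coeff p (2 * n + 1)) [0..<Suc (degree p)])"

lemma coeff_pcompose_monom:
  fixes p :: "'a::comm_ring_1 poly"
  assumes "K > 0"
  shows "coeff (pcompose p (monom 1 K)) n = (if K dvd n then coeff p (n div K) else 0)"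
proof (induction p arbitrary: n)
  case (pCons a p)
  show ?case
  proof (cases "n < K")
    case True
    then show ?thesis using assms
      by (cases n) (auto simp: pcompose_pCons coeff_monom_mult dest: dvd_imp_le)
  next
    case False
    then have "K dvd n \<longleftrightarrow> K dvd n - K" and "n div K = Suc ((n - K) div K)"
      using assms by (auto simp: dvd_minus_self div_if)
    with False assms show ?thesis
      by (auto simp: pcompose_pCons coeff_monom_mult pCons.IH coeff_pCons split: nat.split)
  qed
qed simp

lemma pcompose_power: "pcompose (p ^ n) q = pcompose p q ^ n"
  for p q :: "'a::comm_semiring_1 poly"
  by (induction n) (simp_all add: pcompose_mult pcompose_1)

lemma pcompose_dvd_pcompose: "p dvd r \<Longrightarrow> pcompose p q dvd pcompose r q"
  for p q r :: "'a::comm_semiring_1 poly"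
  by (auto simp: pcompose_mult)

lemma is_unit_pcompose: "p dvd 1 \<Longrightarrow> pcompose p q dvd 1"
  for p q :: "'a::comm_semiring_1 poly"
  using pcompose_dvd_pcompose[of p 1 q] by (simp add: pcompose_1)

lemma const_dvd_pcompose_monom_iff:
  fixes p :: "'a::idom poly"
  assumes "K > 0"
  shows "[:c:] dvd pcompose p (monom 1 K) \<longleftrightarrow> [:c:] dvd p"
proof
  assume "[:c:] dvd pcompose p (monom 1 K)"
  then have "c dvd coeff (pcompose p (monom 1 K)) (K * n)" for n
    by (simp add: const_poly_dvd_iff)
  then show "[:c:] dvd p"
    using assms by (simp add: const_poly_dvd_iff coeff_pcompose_monom)
qed (metis pcompose_const pcompose_dvd_pcompose)

section \<open>Even and odd parts\<close>

lemma monom_2_eq: "monom 1 2 = [:0, 0, 1:]"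
  by (rule poly_eqI) (simp add: coeff_monom coeff_pCons split: nat.split)

lemma sq_subst_eq_pcompose_monom: "sq_subst p = pcompose p (monom 1 2)"
  by (simp add: sq_subst_def monom_2_eq)

lemma coeff_sq_subst: "coeff (sq_subst F) n = (if even n then coeff F (n div 2) else 0)"
  by (simp add: sq_subst_eq_pcompose_monom coeff_pcompose_monom)

lemma pcompose_sq_subst_monom:
  "pcompose (sq_subst p) (monom 1 K) = pcompose p (monom 1 (2 * K))"
proof -
  have "pcompose [:0, 0, 1:] (monom 1 K) = (monom 1 (2 * K) :: 'a poly)"
    by (simp add: pcompose_pCons mult_monom mult_2)
  then show ?thesis
    by (simp add: sq_subst_def pcompose_assoc[symmetric])
qed

lemma coeff_0_sq_subst: "coeff (sq_subst p) 0 = coeff p 0"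
  by (simp add: sq_subst_def poly_pcompose flip: poly_0_coeff_0)

lemma sq_subst_mult: "sq_subst (p * q) = sq_subst p * sq_subst q"
  by (simp add: sq_subst_def pcompose_mult)

lemma sq_subst_add: "sq_subst (p + q) = sq_subst p + sq_subst q"
  by (simp add: sq_subst_def pcompose_add)

lemma sq_subst_diff: "sq_subst (p - q) = sq_subst p - sq_subst q"
  by (simp add: sq_subst_def pcompose_diff)

lemma sq_subst_poly_X: "sq_subst poly_X = poly_X * poly_X"
  by (simp add: sq_subst_def poly_X_def pcompose_pCons)

lemma coeff_interleave:
  "coeff (interleave F G) n = (if even n then coeff F (n div 2) else coeff G (n div 2))"
  by (cases n) (auto simp: interleave_def poly_X_def coeff_sq_subst)

lemma coeff_even_part: "coeff (even_part p) n = coeff p (2 * n)"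
  by (auto simp: even_part_def nth_default_def coeff_eq_0 simp del: upt_Suc)

lemma coeff_odd_part: "coeff (odd_part p) n = coeff p (2 * n + 1)"
  by (auto simp: odd_part_def nth_default_def coeff_eq_0 simp del: upt_Suc)

lemma interleave_even_odd_part: "interleave (even_part p) (odd_part p) = p"
  by (rule poly_eqI) (auto simp: coeff_interleave coeff_even_part coeff_odd_part elim!: evenE oddE)

lemma interleave_eq_iff: "interleave F G = interleave F' G' \<longleftrightarrow> F = F' \<and> G = G'"
proof
  assume eq: "interleave F G = interleave F' G'"
  have "coeff F n = coeff F' n \<and> coeff G n = coeff G' n" for n
    using arg_cong[OF eq, of "\<lambda>p. coeff p (2 * n)"]
      arg_cong[OF eq, of "\<lambda>p. coeff p (2 * n + 1)"]
    by (simp add: coeff_interleave)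
  then show "F = F' \<and> G = G'"
    by (auto intro: poly_eqI)
qed simp

lemma const_dvd_interleave_iff:
  fixes F G :: "'a::idom poly"
  shows "[:c:] dvd interleave F G \<longleftrightarrow> [:c:] dvd F \<and> [:c:] dvd G"
proof -
  have "(\<forall>n. c dvd coeff (interleave F G) n) \<longleftrightarrow>
      (\<forall>n. c dvd coeff F n) \<and> (\<forall>n. c dvd coeff G n)"
  proof (intro iffI conjI allI)
    fix n
    assume "\<forall>n. c dvd coeff (interleave F G) n"
    from this[rule_format, of "2 * n"] this[rule_format, of "2 * n + 1"]
    show "c dvd coeff F n" "c dvd coeff G n"
      by (simp_all add: coeff_interleave)
  qed (simp add: coeff_interleave)
  then show ?thesis
    by (simp add: const_poly_dvd_iff)
qed

lemma sq_subst_eq_interleave: "sq_subst F = interleave F 0"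
  by (simp add: interleave_def sq_subst_def)

lemma poly_X_eq_interleave: "poly_X = interleave 0 1"
  by (simp add: interleave_def sq_subst_def pcompose_1)

lemma interleave_add: "interleave F G + interleave F' G' = interleave (F + F') (G + G')"
  by (simp add: interleave_def sq_subst_add algebra_simps)

lemma interleave_diff: "interleave F G - interleave F' G' = interleave (F - F') (G - G')"
  by (simp add: interleave_def sq_subst_diff algebra_simps)

lemma interleave_mult:
  "interleave F G * interleave F' G' = interleave (F * F' + poly_X * G * G') (F * G' + G * F')"
  by (simp add: interleave_def sq_subst_add sq_subst_mult sq_subst_poly_X algebra_simps)

lemma neg_subst_interleave: "neg_subst (interleave F G) = interleave F (- G)"
proof -
  have "pcompose (sq_subst F) [:0, -1:] = sq_subst F" for F :: "'a poly"
    by (simp add: sq_subst_def pcompose_assoc[symmetric] pcompose_pCons)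
  then show ?thesis
    by (simp add: neg_subst_def interleave_def pcompose_add pcompose_mult poly_X_def
        pcompose_pCons sq_subst_def pcompose_uminus)
qed

lemma neg_subst_neg_subst: "neg_subst (neg_subst p) = p"
proof -
  have "pcompose [:0, -1:] [:0, -1:] = ([:0, 1:] :: 'a poly)"
    by (simp add: pcompose_pCons)
  then show ?thesis
    by (simp add: neg_subst_def pcompose_assoc[symmetric])
qed

lemma neg_subst_mult: "neg_subst (p * q) = neg_subst p * neg_subst q"
  by (simp add: neg_subst_def pcompose_mult)

lemma neg_subst_sq_subst: "neg_subst (sq_subst p) = sq_subst p"
  by (simp add: sq_subst_eq_interleave neg_subst_interleave)

lemma coeff_0_neg_subst: "coeff (neg_subst p) 0 = coeff p 0"
  by (simp add: neg_subst_def poly_pcompose flip: poly_0_coeff_0)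

lemma sq_subst_eq_iff: "sq_subst F = sq_subst G \<longleftrightarrow> F = G"
  by (simp add: sq_subst_eq_interleave interleave_eq_iff)

lemma poly_X_mult_interleave: "poly_X * interleave F G = interleave (poly_X * G) F"
  by (simp add: poly_X_eq_interleave interleave_mult)

lemma interleave_mult_neg_subst:
  "interleave F G * neg_subst (interleave F G) = sq_subst (F * F - poly_X * G * G)"
  by (simp add: neg_subst_interleave interleave_mult sq_subst_eq_interleave mult.commute)

lemma sq_subst_diff_power2_interleave:
  "sq_subst (interleave F G) - interleave F G ^ 2
     = interleave (interleave F G - (F * F + poly_X * G * G)) (- (2 * F * G))"
  by (simp add: power2_eq_square sq_subst_eq_interleave interleave_mult interleave_diff mult_ac)

section \<open>Lifting the congruence from Q to A\<close>

lemma double_dvd_power2_diff: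
  fixes a b t :: "'a::comm_ring_1"
  assumes "t dvd a - b" and "2 dvd t"
  shows "2 * t dvd a ^ 2 - b ^ 2"
proof -
  obtain e where e: "a = b + t * e"
    using assms(1) by (metis dvdE add_diff_cancel_left' diff_add_cancel)
  obtain s where s: "t = 2 * s"
    using assms(2) by blast
  have "a ^ 2 - b ^ 2 = 2 * t * (e * b + s * e * e)"
    unfolding e s by (simp add: algebra_simps power2_eq_square)
  then show ?thesis
    by simp
qed

lemma const_power2_dvd_power2_diff:
  fixes a b :: "'a::idom poly"
  assumes "[:2 ^ j:] dvd a - b" and "j \<ge> 1"
  shows "[:2 ^ (j + 1):] dvd a ^ 2 - b ^ 2"
proof -
  have "2 dvd ([:2 ^ j:] :: 'a poly)"
    using assms(2) by (simp add: numeral_poly const_poly_dvd_const_poly_iff dvd_power)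
  from double_dvd_power2_diff[OF assms(1) this] show ?thesis
    by (simp add: numeral_poly ac_simps)
qed

lemma const_power_dvd_const_mult:
  fixes p :: "'a::comm_semiring_1 poly"
  assumes "[:c ^ n:] dvd p"
  shows "[:c ^ Suc n:] dvd [:c:] * p"
  using mult_dvd_mono[OF dvd_refl assms, of "[:c:]"] by (simp add: mult.commute)

lemma const_power_dvd_interleave_contract:
  fixes a b :: "'a::idom poly"
  assumes "[:c ^ n:] dvd interleave a b - [:c:] * (a * a + poly_X * b * b)"
  shows "[:c ^ n:] dvd interleave a b"
proof -
  have "[:c ^ j:] dvd interleave a b" if "j \<le> n" for j
    using that
  proof (induction j)
    case (Suc j)
    then have "[:c ^ j:] dvd a" "[:c ^ j:] dvd b"
      by (simp_all add: const_dvd_interleave_iff)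
    then have "[:c ^ j:] dvd a * a + poly_X * b * b"
      by simp
    then have "[:c ^ Suc j:] dvd [:c:] * (a * a + poly_X * b * b)"
      by (rule const_power_dvd_const_mult)
    moreover have "[:c ^ Suc j:] dvd [:c ^ n:]"
      using Suc.prems by (simp only: const_poly_dvd_const_poly_iff le_imp_power_dvd)
    then have "[:c ^ Suc j:] dvd interleave a b - [:c:] * (a * a + poly_X * b * b)"
      using assms by (rule dvd_trans)
    ultimately have "[:c ^ Suc j:] dvd [:c:] * (a * a + poly_X * b * b)
        + (interleave a b - [:c:] * (a * a + poly_X * b * b))"
      by (rule dvd_add)
    then show ?case
      by simp
  qed (simp flip: one_pCons)
  then show ?thesis
    by simp
qed

lemma dvd_odd_component_of_even_norm:
  fixes F G :: "'a::idom poly"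
  assumes even_norm: "F * F - poly_X * G * G = sq_subst B"
    and cong: "[:2 ^ n:] dvd interleave F G - (F * F + poly_X * G * G)"
  shows "[:2 ^ n:] dvd G"
proof -
  obtain f0 f1 g0 g1 where F: "F = interleave f0 f1" and G: "G = interleave g0 g1"
    by (metis interleave_even_odd_part)
  define S where "S = g0 * g0 + poly_X * g1 * g1"
  have "F * F - poly_X * G * G
      = interleave (f0 * f0 + poly_X * f1 * f1 - poly_X * (2 * g0 * g1)) (2 * f0 * f1 - S)"
    unfolding F G S_def
    by (simp only: interleave_mult poly_X_mult_interleave interleave_diff)
      (rule arg_cong2[where f = interleave]; simp add: algebra_simps)
  with even_norm have f0f1: "2 * f0 * f1 = S"
    by (simp add: sq_subst_eq_interleave interleave_eq_iff)
  have "interleave F G - (F * F + poly_X * G * G)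
      = interleave (F - (f0 * f0 + poly_X * f1 * f1 + poly_X * (2 * g0 * g1)))
          (G - (2 * f0 * f1 + S))"
    unfolding F G S_def
    by (simp only: interleave_mult poly_X_mult_interleave interleave_diff interleave_add)
      (rule arg_cong2[where f = interleave]; simp add: algebra_simps)
  with cong f0f1 have "[:2 ^ n:] dvd interleave g0 g1 - [:2:] * S"
    by (simp add: const_dvd_interleave_iff G numeral_poly)
  then show ?thesis
    unfolding G S_def by (rule const_power_dvd_interleave_contract)
qed

lemma sq_subst_cong_lift:
  fixes A B Q :: "'a::idom poly"
  assumes A_even: "A = sq_subst B"
    and A_norm: "sq_subst A = Q * neg_subst Q"
    and Q_cong: "[:2 ^ (k + 1):] dvd sq_subst Q - Q ^ 2"
  shows "[:2 ^ (k + 2):] dvd sq_subst A - A ^ 2"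
proof -
  define Qe Qo where "Qe = even_part Q" and "Qo = odd_part Q"
  have Q: "Q = interleave Qe Qo"
    by (simp add: Qe_def Qo_def interleave_even_odd_part)
  have A: "A = Qe * Qe - poly_X * Qo * Qo"
    using A_norm by (simp add: Q interleave_mult_neg_subst sq_subst_eq_iff)
  have Q_A: "[:2 ^ (k + 1):] dvd Q - (Qe * Qe + poly_X * Qo * Qo)"
    using Q_cong by (simp add: Q sq_subst_diff_power2_interleave const_dvd_interleave_iff)
  have "Qe * Qe - poly_X * Qo * Qo = sq_subst B"
    using A A_even by simp
  then have Qo: "[:2 ^ (k + 1):] dvd Qo"
    using Q_A unfolding Q by (rule dvd_odd_component_of_even_norm)
  have "Q - neg_subst Q = interleave 0 (2 * Qo)"
    by (simp add: Q neg_subst_interleave interleave_diff)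
  then have "Q ^ 2 - sq_subst A = Q * interleave 0 (2 * Qo)"
    by (simp add: A_norm power2_eq_square flip: right_diff_distrib)
  moreover have "[:2 ^ (k + 2):] dvd 2 * Qo"
    using const_power_dvd_const_mult[OF Qo] by (simp add: numeral_poly)
  ultimately have square_cong: "[:2 ^ (k + 2):] dvd Q ^ 2 - sq_subst A"
    by (simp add: const_dvd_interleave_iff)
  have "A - Q = - (Q - (Qe * Qe + poly_X * Qo * Qo)) - 2 * poly_X * Qo * Qo"
    by (simp add: A algebra_simps)
  moreover have "[:2 ^ (k + 1):] dvd 2 * poly_X * Qo * Qo"
    using Qo by simp
  ultimately have "[:2 ^ (k + 1):] dvd A - Q"
    using Q_A by (simp only: dvd_diff dvd_minus_iff)
  then have "[:2 ^ (k + 2):] dvd A ^ 2 - Q ^ 2"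
    using const_power2_dvd_power2_diff[of "k + 1" A Q] by simp
  from dvd_add[OF square_cong this] have "[:2 ^ (k + 2):] dvd - (sq_subst A - A ^ 2)"
    by simp
  then show ?thesis
    by (simp only: dvd_minus_iff)
qed

lemma n_goodD:
  "n_good k P \<Longrightarrow> m \<le> k \<Longrightarrow> [:2 ^ (m + 1):] dvd pcompose P (monom 1 (2 ^ m)) - P ^ 2 ^ m"
  by (auto simp: n_good_def poly_cong_def)

lemma n_good_imp_dvd_sq_subst_diff:
  assumes "n_good k P" and "k \<ge> 1"
  shows "[:2 ^ (k + 1):] dvd sq_subst P - P ^ 2"
proof -
  define K where "K = (2::nat) ^ (k - 1)"
  have K2: "2 ^ k = 2 * K"
    using assms(2) by (simp add: K_def power_Suc[symmetric])
  have "[:2 ^ k:] dvd pcompose P (monom 1 K) - P ^ K"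
    using n_goodD[OF assms(1), of "k - 1"] assms(2) by (simp add: K_def)
  then have "[:2 ^ (k + 1):] dvd pcompose P (monom 1 K) ^ 2 - (P ^ K) ^ 2"
    using assms(2) by (rule const_power2_dvd_power2_diff)
  moreover have "[:2 ^ (k + 1):] dvd pcompose P (monom 1 (2 * K)) - P ^ (2 * K)"
    using n_goodD[OF assms(1), of k] K2 by simp
  ultimately have "[:2 ^ (k + 1):] dvd
      (pcompose P (monom 1 (2 * K)) - P ^ (2 * K)) - (pcompose P (monom 1 K) ^ 2 - (P ^ K) ^ 2)"
    by (rule dvd_diff[rotated])
  also have "\<dots> = pcompose (sq_subst P - P ^ 2) (monom 1 K)"
    by (simp add: pcompose_diff pcompose_sq_subst_monom pcompose_power power_mult[symmetric]
        mult.commute)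
  finally show ?thesis
    by (simp add: const_dvd_pcompose_monom_iff K_def)
qed

lemma n_good_add_1I:
  assumes "n_good k P" and "[:2 ^ (k + 2):] dvd sq_subst P - P ^ 2"
  shows "n_good (k + 1) P"
proof -
  have "[:2 ^ (k + 2):] dvd pcompose (sq_subst P - P ^ 2) (monom 1 (2 ^ k))"
    using assms(2) by (metis pcompose_const pcompose_dvd_pcompose)
  then have "[:2 ^ (k + 2):] dvd
      pcompose P (monom 1 (2 ^ (k + 1))) - pcompose P (monom 1 (2 ^ k)) ^ 2"
    by (simp add: pcompose_diff pcompose_sq_subst_monom pcompose_power)
  moreover have "[:2 ^ (k + 2):] dvd pcompose P (monom 1 (2 ^ k)) ^ 2 - (P ^ 2 ^ k) ^ 2"
    using const_power2_dvd_power2_diff[OF n_goodD[OF assms(1) order_refl]] by simp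
  ultimately have "[:2 ^ (k + 2):] dvd
      (pcompose P (monom 1 (2 ^ (k + 1))) - pcompose P (monom 1 (2 ^ k)) ^ 2)
      + (pcompose P (monom 1 (2 ^ k)) ^ 2 - (P ^ 2 ^ k) ^ 2)"
    by (rule dvd_add)
  then have "[:2 ^ (k + 2):] dvd pcompose P (monom 1 (2 ^ (k + 1))) - P ^ 2 ^ (k + 1)"
    by (simp add: power_mult[symmetric] mult.commute)
  then show ?thesis
    using assms(1) by (auto simp: n_good_def poly_cong_def le_Suc_eq)
qed

lemma n_good_coeff_0:
  assumes "n_good k P" and "k \<ge> 1" and "coeff P 0 \<in> {1, -1}"
  shows "coeff P 0 = 1"
proof -
  have "[:2 ^ 2:] dvd sq_subst P - P ^ 2"
    using n_goodD[OF assms(1), of 1] assms(2) by (simp add: sq_subst_eq_pcompose_monom)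
  then have "4 dvd coeff (sq_subst P - P ^ 2) 0"
    by (simp add: const_poly_dvd_iff)
  then have "4 dvd coeff P 0 - coeff P 0 ^ 2"
    by (simp add: coeff_0_sq_subst coeff_0_power)
  with assms(3) show ?thesis
    by auto
qed

section \<open>The factors of A(x^2)\<close>

lemma irreducible_neg_subst:
  fixes p :: "'a::idom_divide poly"
  assumes "irreducible p"
  shows "irreducible (neg_subst p)"
proof (rule irreducibleI)
  show "neg_subst p \<noteq> 0"
    using assms by (metis neg_subst_neg_subst neg_subst_def pcompose_0 not_irreducible_zero)
  show "\<not> is_unit (neg_subst p)"
    using assms by (metis is_unit_pcompose neg_subst_def neg_subst_neg_subst irreducible_not_unit)
next
  fix a b
  assume "neg_subst p = a * b"
  then have "p = neg_subst a * neg_subst b"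
    by (metis neg_subst_mult neg_subst_neg_subst)
  then have "is_unit (neg_subst a) \<or> is_unit (neg_subst b)"
    by (rule irreducibleD[OF assms])
  then show "is_unit a \<or> is_unit b"
    by (metis is_unit_pcompose neg_subst_def neg_subst_neg_subst)
qed

lemma irreducible_dvd_irreducible_int_poly:
  fixes p q :: "int poly"
  assumes "irreducible p" and "irreducible q" and "p dvd q"
  shows "q = p \<or> q = - p"
proof -
  obtain u where u: "q = p * u"
    using assms(3) by blast
  then have "is_unit u"
    using assms(1,2) by (metis irreducibleD irreducible_not_unit)
  then obtain c where "u = [:c:]" "is_unit c"
    by (auto simp: is_unit_poly_iff)
  then have "u = 1 \<or> u = -1"
    by (auto simp: one_pCons)
  with u show ?thesis
    by auto
qed

lemma sq_subst_even_part_of_neg_subst_eq: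
  fixes p :: "int poly"
  assumes "neg_subst p = p"
  shows "sq_subst (even_part p) = p"
proof -
  have "interleave (even_part p) (- odd_part p) = interleave (even_part p) (odd_part p)"
    using assms by (metis interleave_even_odd_part neg_subst_interleave)
  then have "odd_part p = 0"
    by (simp add: interleave_eq_iff)
  then show ?thesis
    using interleave_even_odd_part[of p] by (simp add: sq_subst_eq_interleave)
qed

lemma neg_subst_ne_self_of_factor_sq_subst:
  fixes A Q R :: "int poly"
  assumes "irreducible A" and AQR: "sq_subst A = Q * R"
    and "\<not> is_unit Q" and "\<not> is_unit R"
  shows "neg_subst Q \<noteq> Q"
proof
  assume Q_even: "neg_subst Q = Q"
  have "Q \<noteq> 0"
  proof
    assume "Q = 0"
    then have "sq_subst A = sq_subst 0"
      using AQR by (simp add: sq_subst_def)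
    with assms(1) show False
      by (simp add: sq_subst_eq_iff)
  qed
  moreover have "Q * neg_subst R = Q * R"
    using AQR Q_even by (metis neg_subst_mult neg_subst_sq_subst)
  ultimately have R_even: "neg_subst R = R"
    by simp
  have "sq_subst A = sq_subst (even_part Q * even_part R)"
    using AQR by (simp add: sq_subst_mult sq_subst_even_part_of_neg_subst_eq Q_even R_even)
  then have "A = even_part Q * even_part R"
    by (simp add: sq_subst_eq_iff)
  then have "is_unit (even_part Q) \<or> is_unit (even_part R)"
    by (rule irreducibleD[OF assms(1)])
  then have "is_unit Q \<or> is_unit R"
    by (metis is_unit_pcompose sq_subst_def sq_subst_even_part_of_neg_subst_eq Q_even R_even)
  with assms(3,4) show False
    by blast
qed

lemma sq_subst_factor_eq_neg_subst:
  fixes A Q R :: "int poly"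
  assumes A: "irreducible A" and AQR: "sq_subst A = Q * R"
    and Q: "irreducible Q" and R: "irreducible R" and A0: "coeff A 0 = 1"
  shows "R = neg_subst Q"
proof -
  have NQ: "irreducible (neg_subst Q)"
    using Q by (rule irreducible_neg_subst)
  have QR0: "coeff Q 0 * coeff R 0 = 1"
    using arg_cong[OF AQR, of "\<lambda>p. coeff p 0"] A0
    by (simp add: coeff_0_sq_subst coeff_mult_0)
  have "neg_subst Q * neg_subst R = Q * R"
    using AQR by (metis neg_subst_mult neg_subst_sq_subst)
  then have "neg_subst Q dvd Q * R"
    by (metis dvd_triv_left)
  then have "neg_subst Q dvd Q \<or> neg_subst Q dvd R"
    using NQ by (simp add: prime_elem_dvd_mult_iff flip: prime_elem_iff_irreducible)
  then show ?thesis
  proof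
    assume "neg_subst Q dvd Q"
    then have "Q = neg_subst Q \<or> Q = - neg_subst Q"
      using NQ Q by (simp add: irreducible_dvd_irreducible_int_poly)
    moreover have "neg_subst Q \<noteq> Q"
      using A AQR Q R by (intro neg_subst_ne_self_of_factor_sq_subst irreducible_not_unit)
    moreover have "Q \<noteq> - neg_subst Q"
    proof
      assume "Q = - neg_subst Q"
      then have "coeff Q 0 = - coeff Q 0"
        by (metis coeff_0_neg_subst coeff_minus)
      with QR0 show False
        by simp
    qed
    ultimately show ?thesis
      by auto
  next
    assume "neg_subst Q dvd R"
    then have "R = neg_subst Q \<or> R = - neg_subst Q"
      using NQ R by (simp add: irreducible_dvd_irreducible_int_poly)
    moreover have "R \<noteq> - neg_subst Q"
    proof
      assume "R = - neg_subst Q"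
      then have "coeff Q 0 * coeff R 0 = - (coeff Q 0 * coeff Q 0)"
        by (simp add: coeff_0_neg_subst)
      with QR0 show False
        by (smt (verit) zero_le_square)
    qed
    ultimately show ?thesis
      by auto
  qed
qed

lemma splitting_sequence_Suc_irreducible:
  "splitting_sequence P Ps \<Longrightarrow> irreducible (Ps n) \<Longrightarrow> Ps (Suc n) = sq_subst (Ps n)"
  by (simp add: splitting_sequence_def sq_subst_def)

lemma splitting_sequence_Suc_reducible:
  assumes "splitting_sequence P Ps" and "\<not> irreducible (Ps n)"
  obtains R where "irreducible (Ps (Suc n))" "irreducible R" "Ps n = Ps (Suc n) * R"
proof -
  obtain Q R where "irreducible Q" "irreducible R" "Ps n = Q * R" "Ps (Suc n) \<in> {Q, R}"
    using assms unfolding splitting_sequence_def by blast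
  with that show ?thesis
    by (auto simp: mult.commute)
qed

lemma splitting_sequence_coeff_0:
  assumes "splitting_sequence P Ps" and "coeff P 0 \<in> {1, -1}"
  shows "coeff (Ps n) 0 \<in> {1, -1}"
proof (induction n)
  case 0
  then show ?case
    using assms by (simp add: splitting_sequence_def)
next
  case (Suc n)
  show ?case
  proof (cases "irreducible (Ps n)")
    case True
    then show ?thesis
      using Suc.IH assms(1) by (simp add: splitting_sequence_Suc_irreducible coeff_0_sq_subst)
  next
    case False
    then obtain R where "Ps n = Ps (Suc n) * R"
      using splitting_sequence_Suc_reducible[OF assms(1)] by metis
    then have "is_unit (coeff (Ps (Suc n)) 0 * coeff R 0)"
      using Suc.IH by (auto simp: coeff_mult_0)
    then have "is_unit (coeff (Ps (Suc n)) 0)"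
      using is_unit_mult_iff by blast
    then show ?thesis
      by auto
  qed
qed

theorem lemma3p16:
  fixes P :: "int poly" and Ps :: "nat \<Rightarrow> int poly" and i k :: nat
  assumes "nice P"
    and "splitting_sequence P Ps"
    and "i \<ge> 1"
    and "binary_string Ps (i - 1) = L" and "binary_string Ps i = L"
    and "binary_string Ps (i + 1) = S"
    and "k \<ge> 1"
    and "n_good k (Ps i)" and "n_good k (Ps (i + 2))"
  shows "n_good (k + 1) (Ps i)"
proof -
  have irreducible: "irreducible (Ps (i - 1))" "irreducible (Ps i)" "\<not> irreducible (Ps (i + 1))"
    using assms(4-6) by (simp_all add: binary_string_def split: if_splits)
  have even: "Ps i = sq_subst (Ps (i - 1))"
    using splitting_sequence_Suc_irreducible[OF assms(2) irreducible(1)] assms(3) by simp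
  obtain R where R: "irreducible (Ps (i + 2))" "irreducible R"
    and split: "sq_subst (Ps i) = Ps (i + 2) * R"
    using splitting_sequence_Suc_reducible[OF assms(2) irreducible(3)]
      splitting_sequence_Suc_irreducible[OF assms(2) irreducible(2)] by auto
  have "coeff (Ps i) 0 = 1"
    using assms(1,2,7,8) by (intro n_good_coeff_0 splitting_sequence_coeff_0) (auto simp: nice_def)
  then have "R = neg_subst (Ps (i + 2))"
    using sq_subst_factor_eq_neg_subst[OF irreducible(2) split R] by blast
  then have "[:2 ^ (k + 2):] dvd sq_subst (Ps i) - Ps i ^ 2"
    using sq_subst_cong_lift[OF even] split n_good_imp_dvd_sq_subst_diff[OF assms(9,7)] by simp
  then show ?thesis
    by (rule n_good_add_1I[OF assms(8)])
qed

end
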